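(* Let $q\ge4$ be even, let $\alpha,\beta\in\mathbb{F}_{q^2}$ with $\alpha\neq0$, $\beta\notin\mathbb{F}_q$ and $\alpha^{q+1}/(\beta^q+\beta)^2$ of absolute trace $0$, let $R=(0,\delta,1)$ and $U_\infty=(1,0,0)$. If $\ell$ is a line of $\mathrm{PG}(2,q^2)$ not through $U_\infty$, then $\ell$ meets $\mathrm{pedal}(R)$ in at most two points.
   Context: Points of $\mathrm{PG}(2,q^2)$ have homogeneous coordinates $(x,y,z)$. $\delta\in\mathbb{F}_{q^2}\setminus\mathbb{F}_q$ satisfies $\delta^q=1+\delta$ and $\delta^2=v+\delta$ with $v\in\mathbb{F}_q$, $v\ne1$, of absolute trace $1$. $\mathcal U_{\alpha\beta}=\{(x,\alpha x^2+\beta x^{q+1}+r,1): x\in\mathbb{F}_{q^2}, r\in\mathbb{F}_q\}\cup\{(0,1,0)\}$, which under the hypotheses is a unital (a set of $q^3+1$ points meeting every line in $1$ or $q+1$ points), and $R\notin\mathcal U_{\alpha\beta}$. For a point $P$ not on the unital, $\mathrm{pedal}(P)$ is the set of points of contact of the $q+1$ tangent lines (lines meeting the unital in exactly one point) through $P$. *)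

theory Defs
  imports Main
begin

type_synonym 'a vec3 = "'a \<times> 'a \<times> 'a"

definition smult3 :: "'a::field \<Rightarrow> 'a vec3 \<Rightarrow> 'a vec3" where
  "smult3 c v = (case v of (x, y, z) \<Rightarrow> (c * x, c * y, c * z))"

definition ppt :: "'a::field vec3 \<Rightarrow> 'a vec3 set" where
  "ppt v = {smult3 c v | c. c \<noteq> 0}"

definition PG2 :: "'a::field vec3 set set" where
  "PG2 = {ppt v | v. v \<noteq> (0, 0, 0)}"

definition dot3 :: "'a::field vec3 \<Rightarrow> 'a vec3 \<Rightarrow> 'a" where
  "dot3 u v = (case u of (a, b, c) \<Rightarrow> case v of (x, y, z) \<Rightarrow> a * x + b * y + c * z)"

definition pline :: "'a::field vec3 \<Rightarrow> 'a vec3 set set" where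
  "pline L = {P \<in> PG2. \<exists>v \<in> P. dot3 L v = 0}"

definition PG2_lines :: "'a::field vec3 set set set" where
  "PG2_lines = {pline L | L. L \<noteq> (0, 0, 0)}"

definition subF :: "nat \<Rightarrow> 'a::field set" where
  "subF q = {x. x ^ q = x}"

definition abs_trace :: "nat \<Rightarrow> 'a::field \<Rightarrow> 'a" where
  "abs_trace h x = (\<Sum>i<h. x ^ (2 ^ i))"

definition U_ab :: "nat \<Rightarrow> 'a::field \<Rightarrow> 'a \<Rightarrow> 'a vec3 set set" where
  "U_ab q \<alpha> \<beta> = {ppt (x, \<alpha> * x ^ 2 + \<beta> * x ^ (q + 1) + r, 1) | x r. r \<in> subF q}
                  \<union> {ppt (0, 1, 0)}"

definition tangent_line :: "'a::field vec3 set set \<Rightarrow> 'a vec3 set set \<Rightarrow> bool" where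
  "tangent_line U l \<longleftrightarrow> l \<in> PG2_lines \<and> card (l \<inter> U) = 1"

definition pedal :: "'a::field vec3 set set \<Rightarrow> 'a vec3 set \<Rightarrow> 'a vec3 set set" where
  "pedal U P = {X. \<exists>l. tangent_line U l \<and> P \<in> l \<and> l \<inter> U = {X}}"

end

theory Submission
  imports Defs "HOL-Computational_Algebra.Primes" "HOL-Computational_Algebra.Polynomial"
begin

text \<open>
  Write N(x) = x^(q+1), Tr(x) = x^q + x and b = Tr(\<beta>). A tangent line through R = (0, \<delta>, 1)
  cannot be x = 0, so it is y = M x + \<delta>, and its points on the unital are those with
  Q(x) + Tr(M x) = 1, where Q(x) = Tr(\<alpha> x^2) + b N(x) is a quadratic form on F_{q^2} over F_q.
  The trace condition makes Q anisotropic: a nonzero zero w of Q would give u = \<alpha> w^2 / (b N(w))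
  with Tr(u) = 1 and u^2 + u = N(\<alpha>) / b^2. Completing the square with M = b c^q turns the
  point set into a level set of Q translated by c, and a level set of an anisotropic form
  through a nonzero vector y contains a second point on the line y + F_q \<delta> y. So tangency
  forces the point of contact to be x = c, i.e. pedal(R) lies on the curve y = b N(x) + \<delta>.
  On a line a x + b' y + c' = 0 with a \<noteq> 0 the abscissa x is determined by N(x), and
  taking norms of a x = b' b N(x) + b' \<delta> + c' gives a nonzero polynomial of degree at
  most 2 vanishing at N(x); hence at most two points.
\<close>

lemma power_card_UNIV_eq_self:
  fixes x :: "'a::{field,finite}"
  shows "x ^ card (UNIV :: 'a set) = x"
proof (cases "x = 0")
  case True
  then show ?thesis by (simp add: finite_UNIV_card_ge_0)
next
  case False
  let ?U = "UNIV - {0::'a}"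
  have "x ^ card ?U * (\<Prod>y\<in>?U. y) = (\<Prod>y\<in>?U. x * y)"
    by (simp add: prod.distrib)
  also have "\<dots> = (\<Prod>y\<in>?U. y)"
    by (rule prod.reindex_bij_witness[of _ "\<lambda>y. y / x" "\<lambda>y. x * y"]) (use False in auto)
  finally have "x ^ card ?U = 1"
    by simp
  moreover have "card (UNIV :: 'a set) = Suc (card ?U)"
    using finite_UNIV_card_ge_0[where ?'a = 'a] by (simp add: card_Diff_singleton)
  ultimately show ?thesis
    by (simp only: power_Suc2 mult_1_left)
qed

lemma CHAR_eq_2_if_even_card:
  assumes "even (card (UNIV :: 'a::{field,finite} set))"
  shows "CHAR('a) = 2"
proof (rule CHAR_eq_posI)
  have "(-1::'a) = (-1) ^ card (UNIV :: 'a set)" by (rule power_card_UNIV_eq_self[symmetric])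
  also have "\<dots> = 1" using assms by simp
  finally show "of_nat 2 = (0::'a)" by (simp add: eq_neg_iff_add_eq_0)
qed (auto simp: numeral_2_eq_2 less_Suc_eq)

lemma abs_trace_artin_schreier:
  fixes u :: "'a::field"
  assumes char: "CHAR('a) = 2"
  shows "abs_trace h (u ^ 2 + u) = u ^ 2 ^ h + u"
proof -
  have "(u ^ 2 + u) ^ 2 ^ i = u ^ 2 ^ Suc i - u ^ 2 ^ i" for i
    using char freshmans_dream'[of "2 ^ i" i "u ^ 2" u]
    by (simp add: minus_CHAR_2 flip: power_mult)
  then have "abs_trace h (u ^ 2 + u) = (\<Sum>i<h. u ^ 2 ^ Suc i - u ^ 2 ^ i)"
    by (simp add: abs_trace_def)
  also have "\<dots> = u ^ 2 ^ h - u"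
    by (subst sum_lessThan_telescope) simp
  finally show ?thesis
    using minus_CHAR_2[OF char] by simp
qed

lemma in_ppt: "v \<in> ppt v"
  unfolding ppt_def by (rule CollectI, rule exI[of _ 1]) (cases v, simp add: smult3_def)

lemma dot3_smult3: "dot3 L (smult3 c v) = c * dot3 L v"
  by (cases L, cases v) (simp add: dot3_def smult3_def algebra_simps)

lemma dot3_commute: "dot3 L v = dot3 v L"
  by (cases L, cases v) (simp add: dot3_def algebra_simps)

lemma ppt_in_pline_iff:
  assumes "v \<noteq> (0, 0, 0)"
  shows "ppt v \<in> pline L \<longleftrightarrow> dot3 L v = 0"
proof
  assume "ppt v \<in> pline L"
  then obtain c where "c \<noteq> 0" "dot3 L (smult3 c v) = 0"
    unfolding pline_def ppt_def by blast
  then show "dot3 L v = 0" by (simp add: dot3_smult3)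
next
  assume "dot3 L v = 0"
  then show "ppt v \<in> pline L"
    unfolding pline_def PG2_def using assms in_ppt by blast
qed

lemma pline_smult3:
  assumes "c \<noteq> 0"
  shows "pline (smult3 c L) = pline L"
  using assms by (simp add: pline_def dot3_commute[of "smult3 c L"] dot3_smult3 dot3_commute[of L])

lemma PG2_linesE:
  assumes "l \<in> PG2_lines"
  obtains a b c where "(a, b, c) \<noteq> (0, 0, 0)" and "l = pline (a, b, c)"
  using assms unfolding PG2_lines_def by auto

lemma ppt_affine_eq_iff:
  "ppt (x, y, 1) = ppt (x', y', 1) \<longleftrightarrow> x = x' \<and> (y::'a::field) = y'"
proof
  assume "ppt (x, y, 1) = ppt (x', y', 1)"
  then have "(x, y, 1) \<in> ppt (x', y', 1)" using in_ppt by metis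
  then show "x = x' \<and> y = y'" by (auto simp: ppt_def smult3_def)
qed simp

lemma ppt_010_neq_affine: "ppt (0, 1, 0) \<noteq> ppt (x, y, 1::'a::field)"
proof
  assume "ppt (0, 1, 0) = ppt (x, y, 1::'a)"
  then have "(x, y, 1) \<in> ppt (0, 1, 0::'a)" using in_ppt by metis
  then show False by (auto simp: ppt_def smult3_def)
qed

lemma U_ab_cases:
  assumes "P \<in> U_ab q \<alpha> \<beta>"
  obtains "P = ppt (0, 1, 0)" | x y where "P = ppt (x, y, 1)"
  using assms unfolding U_ab_def by blast

lemma ppt_affine_in_U_ab_iff:
  "ppt (x, y, 1) \<in> U_ab q \<alpha> \<beta> \<longleftrightarrow> y - \<alpha> * x ^ 2 - \<beta> * x ^ (q + 1) \<in> subF q"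
proof
  assume "ppt (x, y, 1) \<in> U_ab q \<alpha> \<beta>"
  then obtain x' r where "ppt (x, y, 1) = ppt (x', \<alpha> * x' ^ 2 + \<beta> * x' ^ (q + 1) + r, 1)"
    and "r \<in> subF q"
    unfolding U_ab_def using ppt_010_neq_affine by fastforce
  then show "y - \<alpha> * x ^ 2 - \<beta> * x ^ (q + 1) \<in> subF q"
    by (auto simp: ppt_affine_eq_iff)
next
  assume "y - \<alpha> * x ^ 2 - \<beta> * x ^ (q + 1) \<in> subF q"
  moreover have "ppt (x, y, 1) = ppt (x, \<alpha> * x ^ 2 + \<beta> * x ^ (q + 1) + (y - \<alpha> * x ^ 2 - \<beta> * x ^ (q + 1)), 1)"
    by simp
  ultimately show "ppt (x, y, 1) \<in> U_ab q \<alpha> \<beta>"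
    unfolding U_ab_def by blast
qed

lemma ppt_010_in_U_ab: "ppt (0, 1, 0) \<in> U_ab q \<alpha> \<beta>"
  unfolding U_ab_def by blast

locale char2_conjugation =
  fixes q :: nat and cnj :: "'a::field \<Rightarrow> 'a"
  assumes CHAR_2: "CHAR('a) = 2"
    and q_power_of_2: "\<exists>h. q = 2 ^ h"
    and cnj_def: "cnj x = x ^ q"
    and cnj_cnj [simp]: "cnj (cnj x) = x"
begin

lemma two_eq_zero [simp]: "(2::'a) = 0"
proof -
  have "of_nat CHAR('a) = (0::'a)"
    by (rule of_nat_CHAR)
  then show ?thesis
    by (simp add: CHAR_2)
qed

lemma uminus_eq_self [simp]: "- x = (x::'a)"
  by (rule uminus_CHAR_2[OF CHAR_2])

lemma diff_eq_add [simp]: "x - y = x + (y::'a)"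
  by (rule minus_CHAR_2[OF CHAR_2])

lemma add_self [simp]: "x + x = (0::'a)"
  using mult_2[of x] by simp

lemma add_eq_0_iff_eq: "x + y = 0 \<longleftrightarrow> x = (y::'a)"
  using eq_neg_iff_add_eq_0[of x y] by simp

lemma square_add: "(x + y) ^ 2 = x ^ 2 + (y::'a) ^ 2"
  by (simp add: power2_sum)

lemma cnj_add [simp]: "cnj (x + y) = cnj x + cnj y"
proof -
  obtain h where "q = 2 ^ h" using q_power_of_2 by blast
  then show ?thesis
    using CHAR_2 freshmans_dream'[of q h x y] by (simp add: cnj_def)
qed

lemma cnj_mult [simp]: "cnj (x * y) = cnj x * cnj y"
  by (simp add: cnj_def power_mult_distrib)

lemma cnj_0 [simp]: "cnj 0 = 0"
  using q_power_of_2 by (auto simp: cnj_def)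

lemma cnj_divide [simp]: "cnj (x / y) = cnj x / cnj y"
  by (simp add: cnj_def power_divide)

lemma cnj_eq_0_iff [simp]: "cnj x = 0 \<longleftrightarrow> x = 0"
  by (metis cnj_0 cnj_cnj)

lemma subF_iff_cnj_eq: "x \<in> subF q \<longleftrightarrow> cnj x = x"
  by (simp add: subF_def cnj_def)

definition tr :: "'a \<Rightarrow> 'a" where
  "tr x = cnj x + x"

definition nrm :: "'a \<Rightarrow> 'a" where
  "nrm x = cnj x * x"

lemma cnj_tr [simp]: "cnj (tr x) = tr x"
  by (simp add: tr_def add.commute)

lemma cnj_nrm [simp]: "cnj (nrm x) = nrm x"
  by (simp add: nrm_def mult.commute)

lemma nrm_eq_0_iff [simp]: "nrm x = 0 \<longleftrightarrow> x = 0"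
  by (simp add: nrm_def)

lemma tr_0 [simp]: "tr 0 = 0"
  by (simp add: tr_def)

lemma tr_add: "tr (x + y) = tr x + tr y"
  by (simp add: tr_def algebra_simps)

lemma tr_scale: "cnj c = c \<Longrightarrow> tr (c * x) = c * tr x"
  by (simp add: tr_def algebra_simps)

lemma power_Suc_q_eq_nrm: "x ^ (q + 1) = nrm x"
  by (simp add: nrm_def cnj_def)

definition qform :: "'a \<Rightarrow> 'a \<Rightarrow> 'a \<Rightarrow> 'a" where
  "qform a b w = tr (a * w ^ 2) + b * nrm w"

lemma cnj_qform: "cnj b = b \<Longrightarrow> cnj (qform a b w) = qform a b w"
  by (simp add: qform_def)

lemma qform_smult: "cnj m = m \<Longrightarrow> qform a b (m * w) = m ^ 2 * qform a b w"
  by (simp add: qform_def nrm_def tr_def algebra_simps power2_eq_square)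

lemma qform_add: "qform a b (x + z) = qform a b x + qform a b z + b * tr (cnj x * z)"
proof -
  have "nrm (x + z) = nrm x + nrm z + tr (cnj x * z)"
    by (simp add: nrm_def tr_def algebra_simps)
  then show ?thesis
    by (simp add: qform_def square_add tr_add algebra_simps)
qed

lemma qform_anisotropic:
  assumes q: "q = 2 ^ h" and b: "cnj b = b" "b \<noteq> 0"
    and trace: "abs_trace h (nrm a / b ^ 2) = 0" and w: "w \<noteq> 0"
  shows "qform a b w \<noteq> 0"
proof
  assume "qform a b w = 0"
  then have tr_aw: "tr (a * w ^ 2) = b * nrm w"
    by (simp add: qform_def add_eq_0_iff_eq)
  define u where "u = a * w ^ 2 / (b * nrm w)"
  have "tr u = tr (a * w ^ 2) / (b * nrm w)"
    using b by (simp add: u_def tr_def add_divide_distrib)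
  then have tr_u: "tr u = 1"
    using tr_aw b w by simp
  have "nrm u = nrm a * nrm w ^ 2 / (b ^ 2 * nrm w ^ 2)"
    using b by (simp add: u_def nrm_def power2_eq_square mult_ac)
  then have nrm_u: "nrm u = nrm a / b ^ 2"
    using w by simp
  have "u ^ 2 + u = u ^ 2 + u * tr u"
    using tr_u by simp
  also have "\<dots> = nrm u"
    by (simp add: tr_def nrm_def power2_eq_square algebra_simps)
  finally have "abs_trace h (nrm a / b ^ 2) = abs_trace h (u ^ 2 + u)"
    using nrm_u by simp
  also have "\<dots> = tr u"
    using abs_trace_artin_schreier[OF CHAR_2] q by (simp add: tr_def cnj_def add.commute)
  finally show False
    using trace tr_u by simp
qed

lemma qform_level_set_second_point:
  assumes aniso: "\<And>w. w \<noteq> 0 \<Longrightarrow> qform a b w \<noteq> 0"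
    and b: "cnj b = b" "b \<noteq> 0" and d: "tr d = 1" and y: "y \<noteq> 0"
  shows "\<exists>z. z \<noteq> 0 \<and> qform a b (y + z) = qform a b y"
proof -
  have "d \<noteq> 0" using d by (auto simp: tr_def)
  then have Q_dy: "qform a b (d * y) \<noteq> 0"
    using aniso y by simp
  \<comment> \<open>For t in F_q, Q(y + t d y) = Q(y) + t (t Q(d y) + b N(y)); z is the nonzero root.\<close>
  define \<mu> where "\<mu> = b * nrm y / qform a b (d * y)"
  define z where "z = \<mu> * (d * y)"
  have cnj_\<mu>: "cnj \<mu> = \<mu>"
    using b by (simp add: \<mu>_def cnj_qform)
  have "z \<noteq> 0"
    using b \<open>d \<noteq> 0\<close> y Q_dy by (simp add: z_def \<mu>_def)
  have "tr (cnj y * z) = \<mu> * nrm y * tr d"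
    using cnj_\<mu> by (simp add: z_def tr_def nrm_def algebra_simps)
  then have "qform a b z + b * tr (cnj y * z) = \<mu> * (\<mu> * qform a b (d * y) + b * nrm y)"
    using d cnj_\<mu> by (simp add: z_def qform_smult power2_eq_square algebra_simps)
  also have "\<mu> * qform a b (d * y) = b * nrm y"
    using Q_dy by (simp add: \<mu>_def)
  finally have "qform a b (y + z) = qform a b y"
    by (simp add: qform_add)
  with \<open>z \<noteq> 0\<close> show ?thesis by blast
qed

lemma qform_conic_singleton_center:
  assumes aniso: "\<And>w. w \<noteq> 0 \<Longrightarrow> qform a b w \<noteq> 0"
    and b: "cnj b = b" "b \<noteq> 0" and d: "tr d = 1"
    and singleton: "{x. qform a b x + tr (M * x) = k} = {x\<^sub>1}"
  shows "M = b * cnj x\<^sub>1"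
proof -
  define c where "c = cnj (M / b)"
  have M: "M = b * cnj c"
    using b by (simp add: c_def)
  have complete_square: "qform a b x + tr (M * x) = qform a b (x + c) + qform a b c" for x
    using b by (simp add: M qform_add tr_def algebra_simps)
  have "x\<^sub>1 + c = 0"
  proof (rule ccontr)
    assume "x\<^sub>1 + c \<noteq> 0"
    then obtain z where "z \<noteq> 0" and "qform a b (x\<^sub>1 + c + z) = qform a b (x\<^sub>1 + c)"
      using qform_level_set_second_point[OF aniso b d] by blast
    then have "qform a b (x\<^sub>1 + z) + tr (M * (x\<^sub>1 + z)) = qform a b x\<^sub>1 + tr (M * x\<^sub>1)"
      by (simp only: complete_square add_ac)
    moreover have "qform a b x\<^sub>1 + tr (M * x\<^sub>1) = k"
      using singleton by blast
    ultimately have "x\<^sub>1 + z \<in> {x. qform a b x + tr (M * x) = k}"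
      by simp
    with \<open>z \<noteq> 0\<close> show False
      using singleton by simp
  qed
  then show ?thesis
    by (simp add: M add_eq_0_iff_eq)
qed


lemma tangent_line_through_axis_point:
  fixes \<alpha> \<beta> \<delta> :: 'a
  assumes "l \<in> PG2_lines" and "ppt (0, \<delta>, 1) \<in> l" and "l \<inter> U_ab q \<alpha> \<beta> = {P}"
  obtains M where "l = pline (M, 1, \<delta>)"
proof -
  obtain a b c where "(a, b, c) \<noteq> (0, 0, 0)" and l: "l = pline (a, b, c)"
    using assms(1) by (rule PG2_linesE)
  have "dot3 (a, b, c) (0, \<delta>, 1) = 0"
    using assms(2) by (simp add: l ppt_in_pline_iff)
  then have c: "c = b * \<delta>"
    by (simp add: dot3_def add_eq_0_iff_eq)
  have "b \<noteq> 0"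
  proof
    assume "b = 0"
    then have "ppt (0, 1, 0) \<in> l" and "ppt (0, 0, 1) \<in> l"
      using c by (simp_all add: l ppt_in_pline_iff dot3_def)
    moreover have "ppt (0, 0, 1) \<in> U_ab q \<alpha> \<beta>"
      by (simp add: ppt_affine_in_U_ab_iff subF_iff_cnj_eq)
    ultimately have "ppt (0, 1, 0) \<in> {P}" and "ppt (0, 0, 1) \<in> {P}"
      using ppt_010_in_U_ab unfolding assms(3)[symmetric] by simp_all
    then show False
      by (metis ppt_010_neq_affine singletonD)
  qed
  then have "l = pline (smult3 (1 / b) (a, b, c))"
    by (simp add: l pline_smult3)
  also have "smult3 (1 / b) (a, b, c) = (a / b, 1, \<delta>)"
    using \<open>b \<noteq> 0\<close> by (simp add: smult3_def c)
  finally show thesis by (rule that)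
qed

lemma affine_point_in_U_ab_iff:
  assumes "tr \<delta> = 1"
  shows "ppt (x, M * x + \<delta>, 1) \<in> U_ab q \<alpha> \<beta> \<longleftrightarrow> qform \<alpha> (tr \<beta>) x + tr (M * x) = 1"
proof -
  define e where "e = M * x + \<delta> + \<alpha> * x ^ 2 + \<beta> * nrm x"
  have "tr e = tr (M * x) + tr \<delta> + tr (\<alpha> * x ^ 2) + nrm x * tr \<beta>"
    by (simp add: e_def tr_add tr_scale mult.commute[of \<beta>])
  also have "\<dots> = 1 + (qform \<alpha> (tr \<beta>) x + tr (M * x))"
    by (simp add: assms qform_def mult.commute add_ac)
  finally have "tr e = 1 + (qform \<alpha> (tr \<beta>) x + tr (M * x))" .
  moreover have "e \<in> subF q \<longleftrightarrow> tr e = 0"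
    by (simp add: subF_iff_cnj_eq tr_def add_eq_0_iff_eq)
  ultimately show ?thesis
    unfolding ppt_affine_in_U_ab_iff power_Suc_q_eq_nrm diff_eq_add e_def[symmetric]
    by (metis add_eq_0_iff_eq)
qed

lemma pline_inter_U_ab:
  assumes "tr \<delta> = 1"
  shows "pline (M, 1, \<delta>) \<inter> U_ab q \<alpha> \<beta>
    = (\<lambda>x. ppt (x, M * x + \<delta>, 1)) ` {x. qform \<alpha> (tr \<beta>) x + tr (M * x) = 1}"
proof (intro equalityI subsetI)
  fix P
  assume P: "P \<in> pline (M, 1, \<delta>) \<inter> U_ab q \<alpha> \<beta>"
  have "P \<noteq> ppt (0, 1, 0)"
    using P by (auto simp: ppt_in_pline_iff dot3_def)
  then obtain x y where Pxy: "P = ppt (x, y, 1)"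
    using P U_ab_cases by blast
  with P have "y = M * x + \<delta>"
    by (simp add: ppt_in_pline_iff dot3_def add_eq_0_iff_eq add_ac)
  with P Pxy show "P \<in> (\<lambda>x. ppt (x, M * x + \<delta>, 1)) ` {x. qform \<alpha> (tr \<beta>) x + tr (M * x) = 1}"
    using affine_point_in_U_ab_iff[OF assms] by blast
next
  fix P
  assume "P \<in> (\<lambda>x. ppt (x, M * x + \<delta>, 1)) ` {x. qform \<alpha> (tr \<beta>) x + tr (M * x) = 1}"
  then obtain x where "P = ppt (x, M * x + \<delta>, 1)" and "qform \<alpha> (tr \<beta>) x + tr (M * x) = 1"
    by blast
  then show "P \<in> pline (M, 1, \<delta>) \<inter> U_ab q \<alpha> \<beta>"
    using affine_point_in_U_ab_iff[OF assms] by (simp add: ppt_in_pline_iff dot3_def)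
qed

lemma pedal_subset_norm_curve:
  assumes \<delta>: "tr \<delta> = 1" and \<beta>: "tr \<beta> \<noteq> 0"
    and aniso: "\<And>w. w \<noteq> 0 \<Longrightarrow> qform \<alpha> (tr \<beta>) w \<noteq> 0"
  shows "pedal (U_ab q \<alpha> \<beta>) (ppt (0, \<delta>, 1)) \<subseteq> range (\<lambda>x. ppt (x, tr \<beta> * nrm x + \<delta>, 1))"
proof
  fix P
  assume "P \<in> pedal (U_ab q \<alpha> \<beta>) (ppt (0, \<delta>, 1))"
  then obtain l where l: "l \<in> PG2_lines" "ppt (0, \<delta>, 1) \<in> l" "l \<inter> U_ab q \<alpha> \<beta> = {P}"
    unfolding pedal_def tangent_line_def by blast
  then obtain M where "l = pline (M, 1, \<delta>)"
    by (rule tangent_line_through_axis_point)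
  define g where "g x = ppt (x, M * x + \<delta>, 1)" for x
  define S where "S = {x. qform \<alpha> (tr \<beta>) x + tr (M * x) = 1}"
  have gS: "g ` S = {P}"
    using l pline_inter_U_ab[OF \<delta>] by (simp add: g_def S_def \<open>l = pline (M, 1, \<delta>)\<close>)
  then obtain x\<^sub>1 where "x\<^sub>1 \<in> S" and P: "P = g x\<^sub>1"
    by (metis imageE insertI1)
  have "S = {x\<^sub>1}"
  proof (intro equalityI subsetI)
    fix x
    assume "x \<in> S"
    then have "g x = g x\<^sub>1"
      using gS P by blast
    then show "x \<in> {x\<^sub>1}"
      by (simp add: g_def ppt_affine_eq_iff)
  qed (use \<open>x\<^sub>1 \<in> S\<close> in simp)
  then have "M = tr \<beta> * cnj x\<^sub>1"
    using qform_conic_singleton_center[OF aniso _ \<beta> \<delta>] by (simp add: S_def)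
  then show "P \<in> range (\<lambda>x. ppt (x, tr \<beta> * nrm x + \<delta>, 1))"
    by (simp add: P g_def nrm_def mult.assoc)
qed

lemma line_inter_norm_curve_finite_card_le_2:
  fixes a b b' c d :: 'a
  assumes "a \<noteq> 0"
  defines "X \<equiv> {x. a * x + b' * (b * nrm x + d) + c = 0}"
  shows "finite X" and "card X \<le> 2"
proof -
  define K where "K = b' * b"
  define J where "J = b' * d + c"
  define p where "p = [:nrm J, tr (cnj K * J) + nrm a, nrm K:]"
  have ax: "a * x = K * nrm x + J" if "x \<in> X" for x
    using that by (simp add: X_def K_def J_def add_eq_0_iff_eq algebra_simps)
  have root: "poly p (nrm x) = 0" if "x \<in> X" for x
  proof -
    have "nrm a * nrm x = nrm (a * x)"
      by (simp add: nrm_def mult_ac)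
    also have "\<dots> = nrm (K * nrm x + J)"
      using ax[OF that] by simp
    finally have "nrm a * nrm x = nrm (K * nrm x + J)" .
    then show ?thesis
      by (simp add: p_def nrm_def tr_def algebra_simps power2_eq_square)
  qed
  have "p \<noteq> 0"
    using assms by (auto simp: p_def)
  define g where "g t = (K * t + J) / a" for t
  have X_sub: "X \<subseteq> g ` {t. poly p t = 0}"
  proof
    fix x
    assume "x \<in> X"
    then have "x = g (nrm x)"
      using assms by (simp add: g_def flip: ax)
    with root[OF \<open>x \<in> X\<close>] show "x \<in> g ` {t. poly p t = 0}"
      by blast
  qed
  have roots_finite: "finite {t. poly p t = 0}"
    using \<open>p \<noteq> 0\<close> by (rule poly_roots_finite)
  then show "finite X"
    using X_sub by (rule finite_surj)
  have "card X \<le> card (g ` {t. poly p t = 0})"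
    using X_sub roots_finite by (intro card_mono) auto
  also have "\<dots> \<le> card {t. poly p t = 0}"
    using roots_finite by (rule card_image_le)
  also have "\<dots> \<le> degree p"
    using \<open>p \<noteq> 0\<close> by (rule card_poly_roots_bound)
  also have "\<dots> \<le> 2"
    by (auto simp: p_def intro: order.trans[OF degree_pCons_le])
  finally show "card X \<le> 2" .
qed

lemma card_pline_inter_norm_curve:
  fixes b \<delta> :: 'a
  assumes "l \<in> PG2_lines" and "ppt (1, 0, 0) \<notin> l"
  shows "card (l \<inter> range (\<lambda>x. ppt (x, b * nrm x + \<delta>, 1))) \<le> 2"
proof -
  obtain a b' c where "(a, b', c) \<noteq> (0, 0, 0)" and l: "l = pline (a, b', c)"
    using assms(1) by (rule PG2_linesE)
  have "a \<noteq> 0"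
    using assms(2) by (auto simp: l ppt_in_pline_iff dot3_def)
  define X where "X = {x. a * x + b' * (b * nrm x + \<delta>) + c = 0}"
  have "l \<inter> range (\<lambda>x. ppt (x, b * nrm x + \<delta>, 1)) = (\<lambda>x. ppt (x, b * nrm x + \<delta>, 1)) ` X"
    by (auto simp: X_def l ppt_in_pline_iff dot3_def)
  also have "card \<dots> \<le> card X"
    unfolding X_def using \<open>a \<noteq> 0\<close> by (intro card_image_le line_inter_norm_curve_finite_card_le_2(1))
  also have "\<dots> \<le> 2"
    unfolding X_def using \<open>a \<noteq> 0\<close> by (rule line_inter_norm_curve_finite_card_le_2(2))
  finally show ?thesis .
qed

end

theorem lemma3p4:
  fixes h :: nat and \<alpha> \<beta> \<delta> v :: "'a::{field, finite}"
  defines "q \<equiv> 2 ^ h"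
  assumes hq: "h \<ge> 2"
    and card: "card (UNIV :: 'a set) = q ^ 2"
    and delta_notin: "\<delta> \<notin> subF q"
    and delta_q: "\<delta> ^ q = 1 + \<delta>"
    and delta_sq: "\<delta> ^ 2 = v + \<delta>"
    and v_in: "v \<in> subF q" and v_ne1: "v \<noteq> 1" and v_tr: "abs_trace h v = 1"
    and alpha_ne: "\<alpha> \<noteq> 0"
    and beta_notin: "\<beta> \<notin> subF q"
    and tr0: "abs_trace h (\<alpha> ^ (q + 1) / (\<beta> ^ q + \<beta>) ^ 2) = 0"
    and l_line: "l \<in> PG2_lines"
    and l_not_Uinf: "ppt (1, 0, 0) \<notin> l"
  shows "card (l \<inter> pedal (U_ab q \<alpha> \<beta>) (ppt (0, \<delta>, 1))) \<le> 2"
proof -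
  define cnj where "cnj x = x ^ q" for x :: 'a
  have "CHAR('a) = 2"
    using card hq by (intro CHAR_eq_2_if_even_card) (simp add: q_def)
  moreover have "cnj (cnj x) = x" for x
    using power_card_UNIV_eq_self[of x] by (simp add: cnj_def card flip: power_mult power2_eq_square)
  ultimately interpret char2_conjugation q cnj
    by unfold_locales (auto simp: q_def cnj_def)
  have tr_\<beta>: "tr \<beta> \<noteq> 0"
    using beta_notin by (simp add: tr_def subF_iff_cnj_eq add_eq_0_iff_eq)
  have tr_\<delta>: "tr \<delta> = 1"
    using delta_q by (simp add: tr_def cnj_def add.assoc)
  have "abs_trace h (nrm \<alpha> / (tr \<beta>) ^ 2) = 0"
    using tr0 unfolding power_Suc_q_eq_nrm by (simp add: tr_def cnj_def)
  then have aniso: "qform \<alpha> (tr \<beta>) w \<noteq> 0" if "w \<noteq> 0" for w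
    using qform_anisotropic[OF q_def[THEN meta_eq_to_obj_eq] cnj_tr tr_\<beta>] that by blast
  have "card (l \<inter> pedal (U_ab q \<alpha> \<beta>) (ppt (0, \<delta>, 1)))
      \<le> card (l \<inter> range (\<lambda>x. ppt (x, tr \<beta> * nrm x + \<delta>, 1)))"
    using pedal_subset_norm_curve[OF tr_\<delta> tr_\<beta> aniso] by (intro card_mono) auto
  also have "\<dots> \<le> 2"
    using l_line l_not_Uinf by (rule card_pline_inter_norm_curve)
  finally show ?thesis .
qed

end
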